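(* For all integers $n\geq 3$ and $k\geq 2$, the digraph $M(n,k)$ is connected-homogeneous.
   Context: Connected-homogeneous: every isomorphism between finite induced subdigraphs whose underlying graphs are connected extends to an automorphism. Construction of $M(n,k)$: let $F=\langle a_1\rangle*\cdots*\langle a_n\rangle$ be the free product of $n$ cyclic groups of order $k$. Form the digraph $T^*$ with vertex set $F\times\{1,\dots,n\}$, arcs in both directions between $(v,i)$ and $(v,j)$ for all $v\in F$ and $i\ne j$ (a copy of $K_n$ for each $v$), and "cycle arcs" $(v,i)\to(va_i,i)$. Form the canonical double cover $T^*\otimes\vec K_2$: vertex set $V T^*\times\{-,+\}$, with an arc $(x,-)\to(y,+)$ whenever $x\to y$ in $T^*$. The cycle arcs $(v,i)\to(va_i,i)$ give arcs $((v,i),-)\to((va_i,i),+)$, which form a bijection between the two levels. $M(n,k)$ is obtained by contracting all of these arcs, i.e. identifying $((v,i),-)$ with $((va_i,i),+)$ for all $v,i$, keeping the remaining arcs $((v,i),-)\to((v,j),+)$ ($i\neq j$) between the resulting vertices. Each reachability class of $M(n,k)$ is a copy of the complement of a perfect matching on $2n$ vertices. *)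

theory Defs
  imports Main
begin

definition digraph_aut :: "'v set \<Rightarrow> ('v \<Rightarrow> 'v \<Rightarrow> bool) \<Rightarrow> ('v \<Rightarrow> 'v) \<Rightarrow> bool" where
  "digraph_aut V A g \<longleftrightarrow> bij_betw g V V \<and> (\<forall>x\<in>V. \<forall>y\<in>V. A x y \<longleftrightarrow> A (g x) (g y))"

definition induced_iso :: "'v set \<Rightarrow> ('v \<Rightarrow> 'v \<Rightarrow> bool) \<Rightarrow> 'v set \<Rightarrow> 'v set \<Rightarrow> ('v \<Rightarrow> 'v) \<Rightarrow> bool" where
  "induced_iso V A X Y f \<longleftrightarrow> X \<subseteq> V \<and> Y \<subseteq> V \<and> bij_betw f X Y \<and>
     (\<forall>x\<in>X. \<forall>y\<in>X. A x y \<longleftrightarrow> A (f x) (f y))"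

definition underlying_connected :: "('v \<Rightarrow> 'v \<Rightarrow> bool) \<Rightarrow> 'v set \<Rightarrow> bool" where
  "underlying_connected A X \<longleftrightarrow>
     (\<forall>x\<in>X. \<forall>y\<in>X. (x, y) \<in> {(u, w). u \<in> X \<and> w \<in> X \<and> (A u w \<or> A w u)}\<^sup>*)"

definition connected_homogeneous :: "'v set \<Rightarrow> ('v \<Rightarrow> 'v \<Rightarrow> bool) \<Rightarrow> bool" where
  "connected_homogeneous V A \<longleftrightarrow>
     (\<forall>X Y f. finite X \<and> underlying_connected A X \<and> induced_iso V A X Y f \<longrightarrow>
        (\<exists>g. digraph_aut V A g \<and> (\<forall>x\<in>X. g x = f x)))"

text \<open>Elements are reduced words: lists of letters (i, e) meaning a_i^e with
  i < n, 0 < e < k, and consecutive letters having distinct generator indices.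
  Generators are indexed 0..n-1.\<close>

definition reduced_word :: "nat \<Rightarrow> nat \<Rightarrow> (nat \<times> nat) list \<Rightarrow> bool" where
  "reduced_word n k w \<longleftrightarrow> (\<forall>p\<in>set w. fst p < n \<and> 0 < snd p \<and> snd p < k) \<and>
     (\<forall>m. Suc m < length w \<longrightarrow> fst (w ! m) \<noteq> fst (w ! Suc m))"

text \<open>right multiplication by the generator a_j\<close>
definition mul_gen :: "nat \<Rightarrow> (nat \<times> nat) list \<Rightarrow> nat \<Rightarrow> (nat \<times> nat) list" where
  "mul_gen k w j =
     (if w \<noteq> [] \<and> fst (last w) = j
      then (if Suc (snd (last w)) = k then butlast w else butlast w @ [(j, Suc (snd (last w)))])
      else w @ [(j, 1)])"

text \<open>Vertices of the double cover T* (x) K_2: ((v,i), s), s = False for level -,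
  s = True for level +.\<close>
type_synonym dc_vertex = "((nat \<times> nat) list \<times> nat) \<times> bool"

text \<open>Non-cycle arcs of the double cover: ((v,i),-) -> ((v,j),+) for i \<noteq> j.\<close>
definition dc_arc :: "nat \<Rightarrow> nat \<Rightarrow> dc_vertex \<Rightarrow> dc_vertex \<Rightarrow> bool" where
  "dc_arc n k x y \<longleftrightarrow> (\<exists>v i j. reduced_word n k v \<and> i < n \<and> j < n \<and> i \<noteq> j \<and>
      x = ((v, i), False) \<and> y = ((v, j), True))"

text \<open>Contraction class of the cycle arc ((v,i),-) -> ((v a_i, i),+).\<close>
definition M_class :: "nat \<Rightarrow> (nat \<times> nat) list \<Rightarrow> nat \<Rightarrow> dc_vertex set" where
  "M_class k v i = {((v, i), False), ((mul_gen k v i, i), True)}"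

definition M_vertices :: "nat \<Rightarrow> nat \<Rightarrow> dc_vertex set set" where
  "M_vertices n k = {M_class k v i | v i. reduced_word n k v \<and> i < n}"

definition M_arc :: "nat \<Rightarrow> nat \<Rightarrow> dc_vertex set \<Rightarrow> dc_vertex set \<Rightarrow> bool" where
  "M_arc n k C D \<longleftrightarrow> (\<exists>x\<in>C. \<exists>y\<in>D. dc_arc n k x y)"

end

theory Submission
  imports Defs "HOL-Combinatorics.Transposition"
begin

text \<open>
  Realise M(n,k) on the pairs (v, i) with v in the free product F and i < n. Left multiplication
  by F acts by automorphisms, and so does the branch swap at {j, j'}: it relabels a_j \<leftrightarrow> a_j' on
  the pairs whose word begins with a_j or a_j' (or is empty, with i \<in> {j, j'}) and fixes everything
  else. This is an automorphism because the branch is attached to the rest of the digraph only at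
  ([], j), ([], j'), ([(j,k-1)], j) and ([(j',k-1)], j'). Translations and branch swaps make the
  digraph vertex-transitive.

  An isomorphism between finite connected induced subdigraphs is then extended one vertex at a
  time along its connected domain. The step needs an automorphism fixing a connected set S and
  moving x to a vertex x' with the same arcs to S, where x is adjacent to some z \<in> S. Translating
  the tail of the arc between x and z to the empty word puts x, x' at ([], j), ([], j') or at
  ([(j,k-1)], j), ([(j',k-1)], j'); then S misses the four attachment vertices, contains z outside
  the branch at {j, j'}, and being connected lies entirely outside it, so the branch swap fixes S.
\<close>

section \<open>Automorphisms and connectivity of digraphs\<close>

lemma digraph_autD:
  assumes "digraph_aut V A g"
  shows digraph_aut_bij: "bij_betw g V V"
    and digraph_aut_arc_iff: "\<And>x y. x \<in> V \<Longrightarrow> y \<in> V \<Longrightarrow> A (g x) (g y) \<longleftrightarrow> A x y"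
  using assms by (auto simp: digraph_aut_def)

lemma digraph_aut_id: "digraph_aut V A id"
  by (simp add: digraph_aut_def)

lemma digraph_aut_comp:
  assumes "digraph_aut V A g" "digraph_aut V A h"
  shows "digraph_aut V A (g \<circ> h)"
proof -
  have "A ((g \<circ> h) x) ((g \<circ> h) y) \<longleftrightarrow> A x y" if "x \<in> V" "y \<in> V" for x y
    using that bij_betwE[OF digraph_aut_bij[OF assms(2)]] digraph_aut_arc_iff[OF assms(1)]
      digraph_aut_arc_iff[OF assms(2)] by simp
  then show ?thesis
    using bij_betw_trans[OF digraph_aut_bij[OF assms(2)] digraph_aut_bij[OF assms(1)]]
    by (simp add: digraph_aut_def)
qed

lemma digraph_aut_funpow:
  assumes "digraph_aut V A g"
  shows "digraph_aut V A (g ^^ m)"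
proof (induction m)
  case 0
  then show ?case using digraph_aut_id by (simp add: id_def)
next
  case (Suc m)
  then show ?case using digraph_aut_comp[OF assms Suc.IH] by (simp add: comp_def)
qed

lemma digraph_aut_inv_into:
  assumes "digraph_aut V A g"
  shows "digraph_aut V A (inv_into V g)"
proof -
  have g: "bij_betw g V V" using assms by (rule digraph_aut_bij)
  have "A (inv_into V g x) (inv_into V g y) \<longleftrightarrow> A x y" if "x \<in> V" "y \<in> V" for x y
  proof -
    have "inv_into V g x \<in> V" "inv_into V g y \<in> V"
      using that bij_betw_apply[OF bij_betw_inv_into[OF g]] by auto
    then show ?thesis
      using that digraph_aut_arc_iff[OF assms] bij_betw_inv_into_right[OF g] by metis
  qed
  then show ?thesis
    by (simp add: digraph_aut_def bij_betw_inv_into[OF g])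
qed

definition underlying_edges :: "('v \<Rightarrow> 'v \<Rightarrow> bool) \<Rightarrow> 'v set \<Rightarrow> ('v \<times> 'v) set" where
  "underlying_edges A X = {(u, w). u \<in> X \<and> w \<in> X \<and> (A u w \<or> A w u)}"

lemma underlying_connected_iff:
  "underlying_connected A X \<longleftrightarrow> (\<forall>x\<in>X. \<forall>y\<in>X. (x, y) \<in> (underlying_edges A X)\<^sup>*)"
  by (simp add: underlying_connected_def underlying_edges_def)

lemma rtrancl_map:
  assumes "\<And>u w. (u, w) \<in> R \<Longrightarrow> (p u, p w) \<in> R'" "(a, b) \<in> R\<^sup>*"
  shows "(p a, p b) \<in> R'\<^sup>*"
  using assms(2) by induction (auto intro: rtrancl_into_rtrancl assms(1))

lemma rtrancl_exit_edge:
  assumes "(a, b) \<in> R\<^sup>*" "a \<in> S" "b \<notin> S"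
  shows "\<exists>u\<in>S. \<exists>w. w \<notin> S \<and> (u, w) \<in> R"
  using assms by induction blast+

lemma underlying_connected_singleton: "underlying_connected A {x}"
  by (simp add: underlying_connected_def)

lemma underlying_connected_insert:
  assumes "underlying_connected A S" "z \<in> S" "A z y \<or> A y z"
  shows "underlying_connected A (insert y S)"
proof -
  let ?E = "underlying_edges A (insert y S)"
  have S: "(a, b) \<in> ?E\<^sup>*" if "a \<in> S" "b \<in> S" for a b
  proof -
    have "(a, b) \<in> (underlying_edges A S)\<^sup>*"
      using assms(1) that by (simp add: underlying_connected_iff)
    moreover have "underlying_edges A S \<subseteq> ?E" by (auto simp: underlying_edges_def)
    ultimately show ?thesis using rtrancl_mono by blast
  qed
  have "(y, z) \<in> ?E" "(z, y) \<in> ?E" using assms(2,3) by (auto simp: underlying_edges_def)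
  then have "(a, z) \<in> ?E\<^sup>*" "(z, a) \<in> ?E\<^sup>*" if "a \<in> insert y S" for a
    using that S[OF _ assms(2)] S[OF assms(2)] by blast+
  then show ?thesis
    unfolding underlying_connected_iff by (blast intro: rtrancl_trans)
qed

lemma underlying_connected_image:
  assumes "underlying_connected A X"
    and "\<And>u w. u \<in> X \<Longrightarrow> w \<in> X \<Longrightarrow> A u w \<Longrightarrow> B (p u) (p w)"
  shows "underlying_connected B (p ` X)"
proof -
  have "(p u, p w) \<in> underlying_edges B (p ` X)" if "(u, w) \<in> underlying_edges A X" for u w
    using that assms(2) by (auto simp: underlying_edges_def)
  then have "(p a, p b) \<in> (underlying_edges B (p ` X))\<^sup>*" if "a \<in> X" "b \<in> X" for a b
    using assms(1) that rtrancl_map[of "underlying_edges A X" p] by (simp add: underlying_connected_iff)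
  then show ?thesis
    by (auto simp: underlying_connected_iff)
qed

section \<open>Connected-homogeneity by one-point extension\<close>

definition vertex_transitive :: "'v set \<Rightarrow> ('v \<Rightarrow> 'v \<Rightarrow> bool) \<Rightarrow> bool" where
  "vertex_transitive V A \<longleftrightarrow> (\<forall>x\<in>V. \<forall>x'\<in>V. \<exists>g. digraph_aut V A g \<and> g x = x')"

definition extension_problem ::
    "'v set \<Rightarrow> ('v \<Rightarrow> 'v \<Rightarrow> bool) \<Rightarrow> 'v set \<Rightarrow> 'v \<Rightarrow> 'v \<Rightarrow> 'v \<Rightarrow> bool" where
  "extension_problem V A S z x x' \<longleftrightarrow>
     S \<subseteq> V \<and> underlying_connected A S \<and> z \<in> S \<and> x \<in> V - S \<and> x' \<in> V - S \<and>
     (\<forall>y\<in>S. (A x y \<longleftrightarrow> A x' y) \<and> (A y x \<longleftrightarrow> A y x')) \<and> (A x z \<or> A z x)"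

definition one_point_extension :: "'v set \<Rightarrow> ('v \<Rightarrow> 'v \<Rightarrow> bool) \<Rightarrow> bool" where
  "one_point_extension V A \<longleftrightarrow>
     (\<forall>S z x x'. extension_problem V A S z x x' \<longrightarrow>
        (\<exists>g. digraph_aut V A g \<and> (\<forall>y\<in>S. g y = y) \<and> g x = x'))"

lemma extend_aut_to_adjacent_vertex:
  assumes ext: "one_point_extension V A" and f: "induced_iso V A X Y f"
    and S: "S \<subseteq> X" "underlying_connected A S" "z \<in> S"
    and y: "y \<in> X - S" "A y z \<or> A z y"
    and g: "digraph_aut V A g" "\<forall>s\<in>S. g s = f s"
  shows "\<exists>g'. digraph_aut V A g' \<and> (\<forall>s\<in>insert y S. g' s = f s)"
proof -
  from f have XV: "X \<subseteq> V" and YV: "Y \<subseteq> V" and bij: "bij_betw f X Y"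
    and iso: "\<forall>u\<in>X. \<forall>w\<in>X. A u w \<longleftrightarrow> A (f u) (f w)"
    by (auto simp: induced_iso_def)
  have gV: "bij_betw g V V" by (rule digraph_aut_bij[OF g(1)])
  have fy: "f y \<in> V" using bij YV y(1) by (auto dest: bij_betwE)
  \<comment> \<open>g\<inverse> \<circ> f is the identity on S, so x' has the same arcs to S as y\<close>
  define x' where "x' = inv_into V g (f y)"
  have x'V: "x' \<in> V" and gx': "g x' = f y"
    using fy bij_betw_inv_into_right[OF gV] bij_betwE[OF bij_betw_inv_into[OF gV]]
    by (auto simp: x'_def)
  have "x' \<notin> S"
  proof
    assume "x' \<in> S"
    then have "f x' = f y" using g(2) gx' by simp
    then show False using \<open>x' \<in> S\<close> S(1) y(1) bij by (auto simp: bij_betw_def inj_on_def)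
  qed
  have same_arcs: "\<forall>s\<in>S. (A y s \<longleftrightarrow> A x' s) \<and> (A s y \<longleftrightarrow> A s x')"
  proof
    fix s assume "s \<in> S"
    then have s: "s \<in> X" "s \<in> V" "g s = f s" using S(1) XV g(2) by auto
    have "A y s \<longleftrightarrow> A (g x') (g s)" "A s y \<longleftrightarrow> A (g s) (g x')" using iso y(1) s gx' by auto
    then show "(A y s \<longleftrightarrow> A x' s) \<and> (A s y \<longleftrightarrow> A s x')"
      using digraph_aut_arc_iff[OF g(1)] x'V s(2) by simp
  qed
  then have "extension_problem V A S z y x'"
    using S XV y x'V \<open>x' \<notin> S\<close> by (auto simp: extension_problem_def)
  then obtain h where h: "digraph_aut V A h" "\<forall>s\<in>S. h s = s" "h y = x'"
    using ext unfolding one_point_extension_def by blast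
  have "\<forall>s\<in>insert y S. (g \<circ> h) s = f s" using h(2,3) g(2) gx' by simp
  then show ?thesis using digraph_aut_comp[OF g(1) h(1)] by blast
qed

lemma extend_aut_to_connected_superset:
  assumes ext: "one_point_extension V A" and f: "induced_iso V A X Y f"
    and X: "finite X" "underlying_connected A X"
    and S: "S \<subseteq> X" "S \<noteq> {}" "underlying_connected A S"
    and g: "digraph_aut V A g" "\<forall>s\<in>S. g s = f s"
  shows "\<exists>g. digraph_aut V A g \<and> (\<forall>x\<in>X. g x = f x)"
  using S g
proof (induction "card (X - S)" arbitrary: S g rule: less_induct)
  case less
  show ?case
  proof (cases "S = X")
    case True
    then show ?thesis using less.prems by blast
  next
    case False
    then obtain s b where "s \<in> S" "b \<in> X" "b \<notin> S" using less.prems by blast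
    then have "(s, b) \<in> (underlying_edges A X)\<^sup>*"
      using X(2) less.prems(1) by (auto simp: underlying_connected_iff)
    then obtain z y where zy: "z \<in> S" "y \<notin> S" "(z, y) \<in> underlying_edges A X"
      using rtrancl_exit_edge \<open>s \<in> S\<close> \<open>b \<notin> S\<close> by metis
    then have y: "y \<in> X - S" "A y z \<or> A z y" by (auto simp: underlying_edges_def)
    obtain g' where g': "digraph_aut V A g'" "\<forall>s\<in>insert y S. g' s = f s"
      using extend_aut_to_adjacent_vertex[OF ext f less.prems(1,3) zy(1) y less.prems(4,5)] by blast
    have "card (X - insert y S) < card (X - S)"
      using X(1) y(1) by (intro psubset_card_mono) auto
    moreover have "underlying_connected A (insert y S)"
      using underlying_connected_insert[OF less.prems(3) zy(1)] y(2) by blast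
    ultimately show ?thesis
      using less.hyps[of "insert y S" g'] less.prems(1) y(1) g' by blast
  qed
qed

lemma extension_problem_image:
  assumes R: "digraph_aut V A R" and P: "extension_problem V A S z x x'"
  shows "extension_problem V A (R ` S) (R z) (R x) (R x')"
proof -
  from P have S: "S \<subseteq> V" "underlying_connected A S" "z \<in> S" and x: "x \<in> V - S" "x' \<in> V - S"
    and same_arcs: "\<forall>y\<in>S. (A x y \<longleftrightarrow> A x' y) \<and> (A y x \<longleftrightarrow> A y x')" and adj: "A x z \<or> A z x"
    by (auto simp: extension_problem_def)
  have bij: "bij_betw R V V" by (rule digraph_aut_bij[OF R])
  have arc: "A (R u) (R w) \<longleftrightarrow> A u w" if "u \<in> V" "w \<in> V" for u w
    using digraph_aut_arc_iff[OF R that] .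
  have "R ` S \<subseteq> V" "R x \<in> V" "R x' \<in> V" using S(1) x bij_betwE[OF bij] by auto
  moreover have "R x \<notin> R ` S" "R x' \<notin> R ` S"
    using S(1) x bij_betw_imp_inj_on[OF bij] by (auto simp: inj_on_def subset_iff)
  moreover have "underlying_connected A (R ` S)"
    using underlying_connected_image[OF S(2)] S(1) arc by blast
  moreover have "\<forall>y\<in>R ` S. (A (R x) y \<longleftrightarrow> A (R x') y) \<and> (A y (R x) \<longleftrightarrow> A y (R x'))"
    using same_arcs S(1) x arc by auto
  moreover have "A (R x) (R z) \<or> A (R z) (R x)" using adj S x arc by auto
  ultimately show ?thesis
    using S(3) by (simp add: extension_problem_def)
qed

lemma aut_fixing_conjugate:
  assumes R: "digraph_aut V A R" and "S \<subseteq> V" "x \<in> V" "x' \<in> V"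
    and g: "digraph_aut V A g" "\<forall>y\<in>R ` S. g y = y" "g (R x) = R x'"
  shows "\<exists>g'. digraph_aut V A g' \<and> (\<forall>y\<in>S. g' y = y) \<and> g' x = x'"
proof -
  have bij: "bij_betw R V V" by (rule digraph_aut_bij[OF R])
  have "inv_into V R (R y) = y" if "y \<in> V" for y
    using bij_betw_inv_into_left[OF bij that] .
  then show ?thesis
    using digraph_aut_comp[OF digraph_aut_comp[OF digraph_aut_inv_into[OF R] g(1)] R] assms(2-4) g(2,3)
    by (intro exI[of _ "inv_into V R \<circ> g \<circ> R"]) auto
qed

theorem connected_homogeneous_if_one_point_extension:
  assumes "vertex_transitive V A" "one_point_extension V A"
  shows "connected_homogeneous V A"
  unfolding connected_homogeneous_def
proof (intro allI impI, elim conjE)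
  fix X Y f
  assume X: "finite X" "underlying_connected A X" and f: "induced_iso V A X Y f"
  show "\<exists>g. digraph_aut V A g \<and> (\<forall>x\<in>X. g x = f x)"
  proof (cases "X = {}")
    case True
    then show ?thesis using digraph_aut_id by blast
  next
    case False
    then obtain x where x: "x \<in> X" by blast
    moreover have "X \<subseteq> V" "f x \<in> V"
      using f x by (auto simp: induced_iso_def dest: bij_betwE)
    ultimately obtain g where "digraph_aut V A g" "g x = f x"
      using assms(1) unfolding vertex_transitive_def by blast
    then show ?thesis
      using extend_aut_to_connected_superset[OF assms(2) f X, of "{x}" g] x
        underlying_connected_singleton[of A x] by auto
  qed
qed

lemma digraph_aut_transfer:
  assumes h: "bij_betw h D V" and arcs: "\<And>x y. x \<in> D \<Longrightarrow> y \<in> D \<Longrightarrow> A (h x) (h y) \<longleftrightarrow> B x y"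
    and g: "digraph_aut D B g"
  shows "digraph_aut V A (h \<circ> g \<circ> inv_into D h)"
proof -
  have h': "bij_betw (inv_into D h) V D" by (rule bij_betw_inv_into[OF h])
  have gD: "bij_betw g D D" by (rule digraph_aut_bij[OF g])
  have "A ((h \<circ> g \<circ> inv_into D h) x) ((h \<circ> g \<circ> inv_into D h) y) \<longleftrightarrow> A x y"
    if "x \<in> V" "y \<in> V" for x y
  proof -
    let ?x = "inv_into D h x" and ?y = "inv_into D h y"
    have D: "?x \<in> D" "?y \<in> D" "g ?x \<in> D" "g ?y \<in> D"
      using that bij_betwE[OF h'] bij_betwE[OF gD] by auto
    have "A x y \<longleftrightarrow> A (h ?x) (h ?y)" using that bij_betw_inv_into_right[OF h] by simp
    then show ?thesis using D arcs digraph_aut_arc_iff[OF g] by simp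
  qed
  then show ?thesis
    using bij_betw_trans[OF bij_betw_trans[OF h' gD] h] by (simp add: digraph_aut_def comp_assoc)
qed

lemma induced_iso_pullback:
  assumes h: "bij_betw h D V" and arcs: "\<And>x y. x \<in> D \<Longrightarrow> y \<in> D \<Longrightarrow> A (h x) (h y) \<longleftrightarrow> B x y"
    and f: "induced_iso V A X Y f"
  shows "induced_iso D B (inv_into D h ` X) (inv_into D h ` Y) (inv_into D h \<circ> f \<circ> h)"
proof -
  let ?h' = "inv_into D h"
  from f have XV: "X \<subseteq> V" and YV: "Y \<subseteq> V" and bij: "bij_betw f X Y"
    and iso: "\<forall>u\<in>X. \<forall>w\<in>X. A u w \<longleftrightarrow> A (f u) (f w)"
    by (auto simp: induced_iso_def)
  have h': "bij_betw ?h' V D" by (rule bij_betw_inv_into[OF h])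
  have hh': "h (?h' x) = x" if "x \<in> V" for x
    using that bij_betw_inv_into_right[OF h] by simp
  have arcs': "B (?h' x) (?h' y) \<longleftrightarrow> A x y" if "x \<in> V" "y \<in> V" for x y
    using that arcs[of "?h' x" "?h' y"] bij_betwE[OF h'] hh' by simp
  have X'D: "?h' ` X \<subseteq> D" "?h' ` Y \<subseteq> D" using XV YV bij_betwE[OF h'] by auto
  have "h ` ?h' ` X = X"
    using image_inv_into_cancel[OF bij_betw_imp_surj_on[OF h] XV] .
  then have hX: "bij_betw h (?h' ` X) X" using bij_betw_subset[OF h X'D(1)] by simp
  have "bij_betw (?h' \<circ> f \<circ> h) (?h' ` X) (?h' ` Y)"
    using bij_betw_trans[OF bij_betw_trans[OF hX bij] bij_betw_subset[OF h' YV]]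
    by (simp add: comp_assoc)
  moreover have "B u w \<longleftrightarrow> B ((?h' \<circ> f \<circ> h) u) ((?h' \<circ> f \<circ> h) w)"
    if uw: "u \<in> ?h' ` X" "w \<in> ?h' ` X" for u w
  proof -
    obtain a b where ab: "a \<in> X" "b \<in> X" "u = ?h' a" "w = ?h' b" using uw by blast
    then have "a \<in> V" "b \<in> V" "f a \<in> V" "f b \<in> V" using XV bij YV by (auto dest: bij_betwE)
    then show ?thesis using ab iso hh' arcs' by simp
  qed
  ultimately show ?thesis using X'D by (simp add: induced_iso_def)
qed

theorem connected_homogeneous_transfer:
  assumes h: "bij_betw h D V" and arcs: "\<And>x y. x \<in> D \<Longrightarrow> y \<in> D \<Longrightarrow> A (h x) (h y) \<longleftrightarrow> B x y"
    and ch: "connected_homogeneous D B"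
  shows "connected_homogeneous V A"
  unfolding connected_homogeneous_def
proof (intro allI impI, elim conjE)
  fix X Y f
  assume fin: "finite X" and con: "underlying_connected A X" and f: "induced_iso V A X Y f"
  let ?h' = "inv_into D h"
  have XV: "X \<subseteq> V" and fX: "f ` X \<subseteq> V" using f by (auto simp: induced_iso_def bij_betw_def)
  have hh': "h (?h' x) = x" if "x \<in> V" for x
    using that bij_betw_inv_into_right[OF h] by simp
  have "underlying_connected B (?h' ` X)"
    using underlying_connected_image[OF con] XV arcs bij_betwE[OF bij_betw_inv_into[OF h]] hh'
    by (metis subsetD)
  then obtain g0 where g0: "digraph_aut D B g0" "\<forall>u\<in>?h' ` X. g0 u = (?h' \<circ> f \<circ> h) u"
    using ch fin induced_iso_pullback[OF h arcs f] unfolding connected_homogeneous_def by blast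
  have "(h \<circ> g0 \<circ> ?h') x = f x" if "x \<in> X" for x
    using that g0(2) XV fX hh' by (simp add: subset_iff)
  then show "\<exists>g. digraph_aut V A g \<and> (\<forall>x\<in>X. g x = f x)"
    using digraph_aut_transfer[OF h arcs g0(1)] by blast
qed

section \<open>Reduced words of the free product\<close>

lemma reduced_word_iff_successively:
  "reduced_word n k w \<longleftrightarrow>
     (\<forall>p\<in>set w. fst p < n \<and> 0 < snd p \<and> snd p < k) \<and> successively (\<lambda>p q. fst p \<noteq> fst q) w"
  by (simp add: reduced_word_def successively_conv_nth)

lemma reduced_word_Nil [simp]: "reduced_word n k []"
  by (simp add: reduced_word_def)

lemma reduced_word_Cons:
  "reduced_word n k (p # w) \<longleftrightarrow> (fst p < n \<and> 0 < snd p \<and> snd p < k) \<and> reduced_word n k w \<and>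
     (w \<noteq> [] \<longrightarrow> fst p \<noteq> fst (hd w))"
  by (auto simp: reduced_word_iff_successively successively_Cons)

lemma reduced_word_snoc:
  "reduced_word n k (w @ [p]) \<longleftrightarrow> reduced_word n k w \<and> (fst p < n \<and> 0 < snd p \<and> snd p < k) \<and>
     (w \<noteq> [] \<longrightarrow> fst (last w) \<noteq> fst p)"
  by (auto simp: reduced_word_iff_successively successively_append_iff)

definition letter_mul_gen :: "nat \<Rightarrow> nat \<times> nat \<Rightarrow> nat \<Rightarrow> (nat \<times> nat) list" where
  "letter_mul_gen k q j =
     (if fst q = j then (if Suc (snd q) = k then [] else [(j, Suc (snd q))]) else [q, (j, 1)])"

lemma mul_gen_Nil [simp]: "mul_gen k [] j = [(j, 1)]"
  by (simp add: mul_gen_def)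

lemma mul_gen_snoc: "mul_gen k (w @ [q]) j = w @ letter_mul_gen k q j"
  by (simp add: mul_gen_def letter_mul_gen_def)

lemma mul_gen_last_letter:
  assumes "2 \<le> k"
  shows "mul_gen k [(c, k - 1)] c = []"
  using assms by (simp add: mul_gen_def)

lemma mul_gen_reduced:
  assumes "reduced_word n k w" "j < n" "2 \<le> k"
  shows "reduced_word n k (mul_gen k w j)"
proof (cases w rule: rev_exhaust)
  case Nil
  then show ?thesis using assms by (simp add: reduced_word_Cons)
next
  case (snoc w' q)
  then show ?thesis
    using assms
    by (auto simp: mul_gen_snoc letter_mul_gen_def reduced_word_iff_successively successively_append_iff)
qed

lemma mul_gen_eq_Nil_iff:
  assumes "reduced_word n k w" "2 \<le> k"
  shows "mul_gen k w j = [] \<longleftrightarrow> w = [(j, k - 1)]"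
proof (cases w rule: rev_exhaust)
  case (snoc w' q)
  then show ?thesis
    using assms by (cases q) (auto simp: mul_gen_snoc letter_mul_gen_def reduced_word_snoc)
qed simp

lemma hd_mul_gen:
  assumes "w \<noteq> []" "mul_gen k w j \<noteq> []"
  shows "fst (hd (mul_gen k w j)) = fst (hd w)"
proof (cases w rule: rev_exhaust)
  case (snoc w' q)
  then show ?thesis
    using assms by (cases "w' = []") (auto simp: mul_gen_def)
qed (use assms in simp)

definition gen_mul_letter :: "nat \<Rightarrow> nat \<Rightarrow> nat \<times> nat \<Rightarrow> (nat \<times> nat) list" where
  "gen_mul_letter k c p =
     (if fst p = c then (if Suc (snd p) = k then [] else [(c, Suc (snd p))]) else [(c, 1), p])"

definition gen_mul :: "nat \<Rightarrow> nat \<Rightarrow> (nat \<times> nat) list \<Rightarrow> (nat \<times> nat) list" where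
  "gen_mul k c w = (case w of [] \<Rightarrow> [(c, 1)] | p # r \<Rightarrow> gen_mul_letter k c p @ r)"

definition gen_inv_mul :: "nat \<Rightarrow> nat \<Rightarrow> (nat \<times> nat) list \<Rightarrow> (nat \<times> nat) list" where
  "gen_inv_mul k c w =
     (if w \<noteq> [] \<and> fst (hd w) = c
      then (if snd (hd w) = 1 then tl w else (c, snd (hd w) - 1) # tl w)
      else (c, k - 1) # w)"

lemma gen_mul_Nil [simp]: "gen_mul k c [] = [(c, 1)]"
  by (simp add: gen_mul_def)

lemma gen_mul_Cons: "gen_mul k c (p # r) = gen_mul_letter k c p @ r"
  by (simp add: gen_mul_def)

lemma gen_mul_reduced:
  assumes "reduced_word n k w" "c < n" "2 \<le> k"
  shows "reduced_word n k (gen_mul k c w)"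
  using assms by (cases w) (auto simp: gen_mul_Cons gen_mul_letter_def reduced_word_Cons)

lemma gen_inv_mul_reduced:
  assumes "reduced_word n k w" "c < n" "2 \<le> k"
  shows "reduced_word n k (gen_inv_mul k c w)"
  using assms by (cases w) (auto simp: gen_inv_mul_def reduced_word_Cons)

lemma gen_inv_mul_gen_mul:
  assumes "reduced_word n k w" "2 \<le> k"
  shows "gen_inv_mul k c (gen_mul k c w) = w"
proof (cases w)
  case (Cons p r)
  then show ?thesis
    using assms by (cases r) (auto simp: gen_mul_Cons gen_mul_letter_def gen_inv_mul_def reduced_word_Cons)
qed (use assms in \<open>simp add: gen_inv_mul_def\<close>)

lemma gen_mul_gen_inv_mul:
  assumes "reduced_word n k w" "2 \<le> k"
  shows "gen_mul k c (gen_inv_mul k c w) = w"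
proof (cases w)
  case (Cons p r)
  then show ?thesis
    using assms by (cases r; cases p) (auto simp: gen_mul_Cons gen_mul_letter_def gen_inv_mul_def reduced_word_Cons)
qed (use assms in \<open>simp add: gen_inv_mul_def gen_mul_Cons gen_mul_letter_def\<close>)

lemma gen_mul_mul_gen:
  assumes "reduced_word n k w" "2 \<le> k"
  shows "gen_mul k c (mul_gen k w j) = mul_gen k (gen_mul k c w) j"
proof (cases w)
  case Nil
  then show ?thesis using assms by (auto simp: gen_mul_Cons gen_mul_letter_def mul_gen_def)
next
  case (Cons p r)
  show ?thesis
  proof (cases r rule: rev_exhaust)
    case Nil
    then show ?thesis
      using Cons assms by (cases p) (auto simp: gen_mul_Cons gen_mul_letter_def mul_gen_def reduced_word_Cons)
  next
    case (snoc m q)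
    then have "gen_mul k c (mul_gen k w j) = gen_mul_letter k c p @ m @ letter_mul_gen k q j"
      using Cons mul_gen_snoc[of k "p # m" q j] by (simp add: gen_mul_Cons)
    also have "\<dots> = mul_gen k (gen_mul k c w) j"
      using Cons snoc mul_gen_snoc[of k "gen_mul_letter k c p @ m" q j] by (simp add: gen_mul_Cons)
    finally show ?thesis .
  qed
qed

lemma funpow_gen_mul:
  assumes "0 < e" "e < k" "r = [] \<or> fst (hd r) \<noteq> c"
  shows "(gen_mul k c ^^ e) r = (c, e) # r"
  using assms
proof (induction e)
  case (Suc e)
  then show ?case
    by (cases "e = 0"; cases r) (auto simp: gen_mul_Cons gen_mul_letter_def)
qed simp

section \<open>The pair model of M(n,k) and its translations\<close>

text \<open>
  The pair (v, i) stands for the vertex M_class k v i = {((v,i),-), ((v a_i,i),+)}. Arcs of M(n,k)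
  leave it only from ((v,i),-), towards the points ((v,j),+) with j \<noteq> i, and ((v,j),+) lies in
  M_class k w j exactly when w a_j = v.
\<close>

definition M_pairs :: "nat \<Rightarrow> nat \<Rightarrow> ((nat \<times> nat) list \<times> nat) set" where
  "M_pairs n k = {(v, i). reduced_word n k v \<and> i < n}"

definition M_pair_arc :: "nat \<Rightarrow> (nat \<times> nat) list \<times> nat \<Rightarrow> (nat \<times> nat) list \<times> nat \<Rightarrow> bool" where
  "M_pair_arc k x y \<longleftrightarrow> snd x \<noteq> snd y \<and> mul_gen k (fst y) (snd y) = fst x"

lemma mem_M_pairs_iff: "x \<in> M_pairs n k \<longleftrightarrow> reduced_word n k (fst x) \<and> snd x < n"
  by (cases x) (simp add: M_pairs_def)

lemma bij_betw_M_class: "bij_betw (case_prod (M_class k)) (M_pairs n k) (M_vertices n k)"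
  unfolding bij_betw_def inj_on_def M_class_def M_pairs_def M_vertices_def
  by (auto simp: doubleton_eq_iff)

lemma M_arc_M_class:
  assumes "x \<in> M_pairs n k" "y \<in> M_pairs n k"
  shows "M_arc n k (case_prod (M_class k) x) (case_prod (M_class k) y) \<longleftrightarrow> M_pair_arc k x y"
  using assms unfolding M_arc_def M_class_def dc_arc_def M_pair_arc_def mem_M_pairs_iff
  by (cases x; cases y) auto

lemma digraph_aut_translation:
  assumes "c < n" "2 \<le> k"
  shows "digraph_aut (M_pairs n k) (M_pair_arc k) (apfst (gen_mul k c))"
  unfolding digraph_aut_def
proof
  show "bij_betw (apfst (gen_mul k c)) (M_pairs n k) (M_pairs n k)"
    by (rule bij_betw_byWitness[where f' = "apfst (gen_inv_mul k c)"])
      (use assms gen_mul_reduced gen_inv_mul_reduced gen_inv_mul_gen_mul gen_mul_gen_inv_mul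
        in \<open>auto simp: mem_M_pairs_iff\<close>)
  show "\<forall>x\<in>M_pairs n k. \<forall>y\<in>M_pairs n k.
      M_pair_arc k x y \<longleftrightarrow> M_pair_arc k (apfst (gen_mul k c) x) (apfst (gen_mul k c) y)"
  proof (intro ballI)
    fix x y assume "x \<in> M_pairs n k" "y \<in> M_pairs n k"
    then have x: "reduced_word n k (fst x)" and y: "reduced_word n k (fst y)" "snd y < n"
      by (auto simp: mem_M_pairs_iff)
    have "mul_gen k (gen_mul k c (fst y)) (snd y) = gen_mul k c (fst x) \<longleftrightarrow>
          gen_mul k c (mul_gen k (fst y) (snd y)) = gen_mul k c (fst x)"
      using gen_mul_mul_gen[OF y(1) assms(2)] by simp
    also have "\<dots> \<longleftrightarrow> mul_gen k (fst y) (snd y) = fst x"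
      using gen_inv_mul_gen_mul[OF mul_gen_reduced[OF y assms(2)] assms(2)]
        gen_inv_mul_gen_mul[OF x assms(2)] by metis
    finally show "M_pair_arc k x y \<longleftrightarrow> M_pair_arc k (apfst (gen_mul k c) x) (apfst (gen_mul k c) y)"
      by (simp add: M_pair_arc_def)
  qed
qed

lemma translation_from_root:
  assumes "reduced_word n k b" "2 \<le> k"
  shows "\<exists>T. digraph_aut (M_pairs n k) (M_pair_arc k) T \<and> (\<forall>i<n. T ([], i) = (b, i))"
  using assms(1)
proof (induction b)
  case Nil
  then show ?case using digraph_aut_id by (metis id_apply)
next
  case (Cons p r)
  obtain c e where p: "p = (c, e)" by (cases p)
  have h: "c < n" "0 < e" "e < k" "reduced_word n k r" "r = [] \<or> fst (hd r) \<noteq> c"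
    using Cons.prems p by (auto simp: reduced_word_Cons)
  obtain T where T: "digraph_aut (M_pairs n k) (M_pair_arc k) T" "\<forall>i<n. T ([], i) = (r, i)"
    using Cons.IH h(4) by blast
  have pow: "(apfst (gen_mul k c) ^^ e) x = apfst (gen_mul k c ^^ e) x" for x
    by (induction e) (auto simp: apfst_def map_prod_def split_beta)
  then have "\<forall>i<n. (apfst (gen_mul k c) ^^ e \<circ> T) ([], i) = (p # r, i)"
    using T(2) funpow_gen_mul[OF h(2,3,5)] p by (simp add: pow)
  moreover have "digraph_aut (M_pairs n k) (M_pair_arc k) (apfst (gen_mul k c) ^^ e \<circ> T)"
    using digraph_aut_comp[OF digraph_aut_funpow[OF digraph_aut_translation[OF h(1) assms(2)]] T(1)] .
  ultimately show ?case by blast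
qed

section \<open>Branch swaps\<close>

definition relabel :: "nat \<Rightarrow> nat \<Rightarrow> (nat \<times> nat) list \<Rightarrow> (nat \<times> nat) list" where
  "relabel j j' = map (apfst (transpose j j'))"

definition in_branch :: "nat \<Rightarrow> nat \<Rightarrow> (nat \<times> nat) list \<times> nat \<Rightarrow> bool" where
  "in_branch j j' x \<longleftrightarrow> (if fst x = [] then snd x \<in> {j, j'} else fst (hd (fst x)) \<in> {j, j'})"

definition branch_swap ::
    "nat \<Rightarrow> nat \<Rightarrow> (nat \<times> nat) list \<times> nat \<Rightarrow> (nat \<times> nat) list \<times> nat" where
  "branch_swap j j' x =
     (if in_branch j j' x then (relabel j j' (fst x), transpose j j' (snd x)) else x)"

lemma relabel_relabel [simp]: "relabel j j' (relabel j j' w) = w"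
  by (induction w) (auto simp: relabel_def)

lemma relabel_eq_Nil_iff [simp]: "relabel j j' w = [] \<longleftrightarrow> w = []"
  by (simp add: relabel_def)

lemma hd_relabel: "w \<noteq> [] \<Longrightarrow> fst (hd (relabel j j' w)) = transpose j j' (fst (hd w))"
  by (cases w) (auto simp: relabel_def)

lemma relabel_reduced:
  assumes "reduced_word n k w" "j < n" "j' < n"
  shows "reduced_word n k (relabel j j' w)"
  using assms
  by (induction w) (auto simp: reduced_word_Cons relabel_def transpose_def hd_map)

lemma mul_gen_relabel:
  "mul_gen k (relabel j j' w) (transpose j j' c) = relabel j j' (mul_gen k w c)"
proof (cases w rule: rev_exhaust)
  case (snoc w' q)
  then show ?thesis
    by (simp add: mul_gen_snoc relabel_def letter_mul_gen_def inj_eq[OF inj_transpose])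
qed (simp add: relabel_def)

lemma in_branch_relabel:
  "in_branch j j' (relabel j j' v, transpose j j' i) \<longleftrightarrow> in_branch j j' (v, i)"
  by (cases "v = []") (auto simp: in_branch_def hd_relabel transpose_eq_iff)

lemma branch_swap_branch_swap [simp]: "branch_swap j j' (branch_swap j j' x) = x"
  by (cases x) (simp add: branch_swap_def in_branch_relabel)

lemma branch_swap_M_pairs:
  "j < n \<Longrightarrow> j' < n \<Longrightarrow> x \<in> M_pairs n k \<Longrightarrow> branch_swap j j' x \<in> M_pairs n k"
  by (auto simp: branch_swap_def mem_M_pairs_iff relabel_reduced transpose_def)

lemma arc_across_branch:
  assumes "y \<in> M_pairs n k" "2 \<le> k" "M_pair_arc k x y" "in_branch j j' x \<noteq> in_branch j j' y"
  shows "fst x = [] \<and> y = ([(snd y, k - 1)], snd y)"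
proof -
  have y: "reduced_word n k (fst y)" using assms(1) by (simp add: mem_M_pairs_iff)
  have x: "fst x = mul_gen k (fst y) (snd y)" using assms(3) by (simp add: M_pair_arc_def)
  have "fst y \<noteq> []"
    using x assms(4) by (auto simp: in_branch_def)
  have "fst x = []"
  proof (rule ccontr)
    assume "fst x \<noteq> []"
    then have "fst (hd (fst x)) = fst (hd (fst y))" using hd_mul_gen[OF \<open>fst y \<noteq> []\<close>] x by simp
    then show False using \<open>fst x \<noteq> []\<close> \<open>fst y \<noteq> []\<close> assms(4) by (simp add: in_branch_def)
  qed
  then show ?thesis
    using mul_gen_eq_Nil_iff[OF y assms(2)] x by (cases y) simp
qed

lemma branch_swap_arc:
  assumes "j < n" "j' < n" "2 \<le> k" "y \<in> M_pairs n k" "M_pair_arc k x y"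
  shows "M_pair_arc k (branch_swap j j' x) (branch_swap j j' y)"
proof (cases "in_branch j j' x = in_branch j j' y")
  case True
  then show ?thesis
    using assms(5) mul_gen_relabel[of k j j' "fst y" "snd y"]
    by (simp add: branch_swap_def M_pair_arc_def inj_eq[OF inj_transpose])
next
  case False
  then have "fst x = []" "y = ([(snd y, k - 1)], snd y)"
    using arc_across_branch[OF assms(4,3,5)] by blast+
  then obtain i d where xy: "x = ([], i)" "y = ([(d, k - 1)], d)" "i \<noteq> d"
    using assms(5) by (cases x) (auto simp: M_pair_arc_def)
  then have "transpose j j' i \<noteq> d" "i \<noteq> transpose j j' d"
    using False by (auto simp: in_branch_def transpose_eq_iff)
  moreover have "branch_swap j j' x = ([], transpose j j' i) \<and> branch_swap j j' y = y \<or>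
      branch_swap j j' x = x \<and> branch_swap j j' y = ([(transpose j j' d, k - 1)], transpose j j' d)"
    using False xy by (auto simp: branch_swap_def relabel_def)
  ultimately show ?thesis
    using mul_gen_last_letter[OF assms(3)] unfolding M_pair_arc_def
    by (elim disjE conjE) (simp_all add: xy)
qed

lemma digraph_aut_branch_swap:
  assumes "j < n" "j' < n" "2 \<le> k"
  shows "digraph_aut (M_pairs n k) (M_pair_arc k) (branch_swap j j')"
  unfolding digraph_aut_def
proof (intro conjI ballI iffI)
  show "bij_betw (branch_swap j j') (M_pairs n k) (M_pairs n k)"
    by (rule bij_betw_byWitness[where f' = "branch_swap j j'"])
      (auto simp: branch_swap_M_pairs[OF assms(1,2)])
  fix x y assume y: "y \<in> M_pairs n k"
  show "M_pair_arc k (branch_swap j j' x) (branch_swap j j' y)" if "M_pair_arc k x y"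
    using branch_swap_arc[OF assms y that] .
  show "M_pair_arc k x y" if "M_pair_arc k (branch_swap j j' x) (branch_swap j j' y)"
    using branch_swap_arc[OF assms branch_swap_M_pairs[OF assms(1,2) y] that] by simp
qed

lemma connected_subset_outside_branch:
  assumes k: "2 \<le> k" and S: "S \<subseteq> M_pairs n k" "underlying_connected (M_pair_arc k) S"
    and z: "z \<in> S" "\<not> in_branch j j' z"
    and boundary: "\<forall>c\<in>{j, j'}. ([], c) \<notin> S \<and> ([(c, k - 1)], c) \<notin> S"
  shows "\<forall>y\<in>S. \<not> in_branch j j' y"
proof
  fix y assume "y \<in> S"
  then have "(z, y) \<in> (underlying_edges (M_pair_arc k) S)\<^sup>*"
    using S(2) z(1) by (simp add: underlying_connected_iff)
  then show "\<not> in_branch j j' y"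
  proof induction
    case base
    then show ?case using z(2) .
  next
    case (step u w)
    then have uw: "u \<in> S" "w \<in> S" "M_pair_arc k u w \<or> M_pair_arc k w u"
      by (auto simp: underlying_edges_def)
    show ?case
    proof
      assume w: "in_branch j j' w"
      then have across: "in_branch j j' u \<noteq> in_branch j j' w" using step.IH by simp
      have "u \<in> M_pairs n k" "w \<in> M_pairs n k" using uw S(1) by auto
      have "\<exists>c. w = ([(c, k - 1)], c) \<or> w = ([], c)"
      proof (cases "M_pair_arc k u w")
        case True
        then show ?thesis using arc_across_branch[OF \<open>w \<in> M_pairs n k\<close> k True across] by blast
      next
        case False
        then have "M_pair_arc k w u" using uw(3) by blast
        then have "fst w = []" using arc_across_branch[OF \<open>u \<in> M_pairs n k\<close> k] across by metis
        then show ?thesis by (cases w) simp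
      qed
      then obtain c where c: "w = ([(c, k - 1)], c) \<or> w = ([], c)" by blast
      with w have "c \<in> {j, j'}" by (auto simp: in_branch_def)
      with c uw(2) boundary show False by auto
    qed
  qed
qed

lemma branch_swap_extension:
  assumes k: "2 \<le> k" and j: "j < n" "j' < n" "j \<noteq> j'"
    and S: "S \<subseteq> M_pairs n k" "underlying_connected (M_pair_arc k) S" "z \<in> S" "\<not> in_branch j j' z"
    and x: "x \<notin> S" "x' \<notin> S"
    and same_arcs: "\<forall>y\<in>S. (M_pair_arc k x y \<longleftrightarrow> M_pair_arc k x' y) \<and> (M_pair_arc k y x \<longleftrightarrow> M_pair_arc k y x')"
    and boundary: "(x = ([], j) \<and> x' = ([], j')) \<or> (x = ([(j, k - 1)], j) \<and> x' = ([(j', k - 1)], j'))"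
  shows "\<exists>g. digraph_aut (M_pairs n k) (M_pair_arc k) g \<and> (\<forall>y\<in>S. g y = y) \<and> g x = x'"
proof -
  have "y \<notin> S" if "y \<in> {([], j), ([], j'), ([(j, k - 1)], j), ([(j', k - 1)], j')}" for y
  proof
    assume "y \<in> S"
    have "\<not> (M_pair_arc k x y \<longleftrightarrow> M_pair_arc k x' y) \<or> \<not> (M_pair_arc k y x \<longleftrightarrow> M_pair_arc k y x')"
      if "y \<noteq> x" "y \<noteq> x'"
      using that \<open>y \<in> {_, _, _, _}\<close> boundary j(3) mul_gen_last_letter[OF k]
      by (auto simp: M_pair_arc_def)
    then show False using \<open>y \<in> S\<close> same_arcs x boundary by blast
  qed
  then have "\<forall>y\<in>S. \<not> in_branch j j' y"
    using connected_subset_outside_branch[OF k S] by blast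
  then have "\<forall>y\<in>S. branch_swap j j' y = y" by (simp add: branch_swap_def)
  moreover have "branch_swap j j' x = x'"
    using boundary by (auto simp: branch_swap_def in_branch_def relabel_def)
  ultimately show ?thesis using digraph_aut_branch_swap[OF j(1,2) k] by blast
qed

lemma root_extension:
  assumes k: "2 \<le> k" and P: "extension_problem (M_pairs n k) (M_pair_arc k) S z x x'"
    and "x \<noteq> x'" and root: "fst (if M_pair_arc k x z then x else z) = []"
  shows "\<exists>g. digraph_aut (M_pairs n k) (M_pair_arc k) g \<and> (\<forall>y\<in>S. g y = y) \<and> g x = x'"
proof -
  from P have S: "S \<subseteq> M_pairs n k" "underlying_connected (M_pair_arc k) S" "z \<in> S"
    and x: "x \<in> M_pairs n k - S" "x' \<in> M_pairs n k - S"
    and same_arcs: "\<forall>y\<in>S. (M_pair_arc k x y \<longleftrightarrow> M_pair_arc k x' y) \<and>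
      (M_pair_arc k y x \<longleftrightarrow> M_pair_arc k y x')"
    and adj: "M_pair_arc k x z \<or> M_pair_arc k z x"
    by (auto simp: extension_problem_def)
  have red: "reduced_word n k (fst u)" "snd u < n" if "u \<in> M_pairs n k" for u
    using that by (auto simp: mem_M_pairs_iff)
  show ?thesis
  proof (cases "M_pair_arc k x z")
    case True
    then have x'z: "M_pair_arc k x' z" using same_arcs S(3) by blast
    then have boundary: "x = ([], snd x) \<and> x' = ([], snd x')"
      using True root by (cases x, cases x') (simp add: M_pair_arc_def)
    have "mul_gen k (fst z) (snd z) = []" using True root by (simp add: M_pair_arc_def)
    then have "fst z = [(snd z, k - 1)]" using mul_gen_eq_Nil_iff[OF red(1) k] S by blast
    then have "\<not> in_branch (snd x) (snd x') z"
      using True x'z by (simp add: in_branch_def M_pair_arc_def)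
    moreover have "snd x \<noteq> snd x'" using boundary \<open>x \<noteq> x'\<close> by metis
    ultimately show ?thesis
      using branch_swap_extension[OF k red(2) red(2) _ S] x same_arcs boundary by blast
  next
    case False
    then have zx: "M_pair_arc k z x" and z_root: "fst z = []" using adj root by auto
    then have zx': "M_pair_arc k z x'" using same_arcs S(3) by blast
    have "mul_gen k (fst x) (snd x) = []" "mul_gen k (fst x') (snd x') = []"
      using zx zx' z_root by (simp_all add: M_pair_arc_def)
    then have "fst x = [(snd x, k - 1)]" "fst x' = [(snd x', k - 1)]"
      using mul_gen_eq_Nil_iff[OF red(1) k] x by blast+
    then have boundary: "x = ([(snd x, k - 1)], snd x) \<and> x' = ([(snd x', k - 1)], snd x')"
      by (metis prod.collapse)
    have "\<not> in_branch (snd x) (snd x') z"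
      using zx zx' z_root by (simp add: in_branch_def M_pair_arc_def)
    moreover have "snd x \<noteq> snd x'" using boundary \<open>x \<noteq> x'\<close> by metis
    ultimately show ?thesis
      using branch_swap_extension[OF k red(2) red(2) _ S] x same_arcs boundary by blast
  qed
qed

lemma one_point_extension_M_pairs:
  assumes k: "2 \<le> k"
  shows "one_point_extension (M_pairs n k) (M_pair_arc k)"
  unfolding one_point_extension_def
proof (intro allI impI)
  fix S z x x'
  assume P: "extension_problem (M_pairs n k) (M_pair_arc k) S z x x'"
  then have S: "S \<subseteq> M_pairs n k" "z \<in> S" and x: "x \<in> M_pairs n k" "x' \<in> M_pairs n k"
    by (auto simp: extension_problem_def)
  show "\<exists>g. digraph_aut (M_pairs n k) (M_pair_arc k) g \<and> (\<forall>y\<in>S. g y = y) \<and> g x = x'"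
  proof (cases "x = x'")
    case True
    then show ?thesis using digraph_aut_id by (metis id_apply)
  next
    case False
    define t where "t = (if M_pair_arc k x z then x else z)"
    have t: "reduced_word n k (fst t)" "snd t < n"
      using x S by (auto simp: t_def mem_M_pairs_iff)
    then obtain T where T: "digraph_aut (M_pairs n k) (M_pair_arc k) T" "T ([], snd t) = t"
      using translation_from_root[OF t(1) k] by fastforce
    define R where "R = inv_into (M_pairs n k) T"
    have R: "digraph_aut (M_pairs n k) (M_pair_arc k) R"
      unfolding R_def by (rule digraph_aut_inv_into[OF T(1)])
    have "([], snd t) \<in> M_pairs n k" using t(2) by (simp add: M_pairs_def)
    then have "R t = ([], snd t)"
      using bij_betw_inv_into_left[OF digraph_aut_bij[OF T(1)]] T(2) unfolding R_def by metis
    moreover have "M_pair_arc k (R x) (R z) \<longleftrightarrow> M_pair_arc k x z"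
      using digraph_aut_arc_iff[OF R] x S by blast
    ultimately have "fst (if M_pair_arc k (R x) (R z) then R x else R z) = []"
      by (simp add: t_def split: if_splits)
    moreover have "R x \<noteq> R x'"
      using False x bij_betw_imp_inj_on[OF digraph_aut_bij[OF R]] by (auto simp: inj_on_def)
    ultimately obtain g where "digraph_aut (M_pairs n k) (M_pair_arc k) g"
        "\<forall>y\<in>R ` S. g y = y" "g (R x) = R x'"
      using root_extension[OF k extension_problem_image[OF R P]] by blast
    then show ?thesis using aut_fixing_conjugate[OF R S(1) x] by blast
  qed
qed

lemma vertex_transitive_M_pairs:
  assumes k: "2 \<le> k"
  shows "vertex_transitive (M_pairs n k) (M_pair_arc k)"
  unfolding vertex_transitive_def
proof (intro ballI)
  fix x x' assume "x \<in> M_pairs n k" "x' \<in> M_pairs n k"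
  then obtain v i v' i' where xx': "x = (v, i)" "x' = (v', i')"
    and "reduced_word n k v" "i < n" "reduced_word n k v'" "i' < n"
    by (auto simp: M_pairs_def)
  then obtain T T' where T: "digraph_aut (M_pairs n k) (M_pair_arc k) T" "T ([], i) = x"
    and T': "digraph_aut (M_pairs n k) (M_pair_arc k) T'" "T' ([], i') = x'"
    using translation_from_root[OF _ k] by metis
  define R where "R = inv_into (M_pairs n k) T"
  have "([], i) \<in> M_pairs n k" using \<open>i < n\<close> by (simp add: M_pairs_def)
  then have "R x = ([], i)"
    using bij_betw_inv_into_left[OF digraph_aut_bij[OF T(1)]] T(2) unfolding R_def by metis
  moreover have "branch_swap i i' ([], i) = ([], i')"
    by (simp add: branch_swap_def in_branch_def relabel_def)
  ultimately have "(T' \<circ> branch_swap i i' \<circ> R) x = x'" using T'(2) by simp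
  moreover have "digraph_aut (M_pairs n k) (M_pair_arc k) (T' \<circ> branch_swap i i' \<circ> R)"
    using digraph_aut_comp[OF digraph_aut_comp[OF T'(1) digraph_aut_branch_swap[OF \<open>i < n\<close> \<open>i' < n\<close> k]]
        digraph_aut_inv_into[OF T(1)]]
    by (simp add: R_def)
  ultimately show "\<exists>g. digraph_aut (M_pairs n k) (M_pair_arc k) g \<and> g x = x'" by blast
qed

theorem proposition5p3:
  fixes n k :: nat
  assumes "n \<ge> 3" and "k \<ge> 2"
  shows "connected_homogeneous (M_vertices n k) (M_arc n k)"
proof -
  have "connected_homogeneous (M_pairs n k) (M_pair_arc k)"
    using connected_homogeneous_if_one_point_extension
      vertex_transitive_M_pairs[OF assms(2)] one_point_extension_M_pairs[OF assms(2)] by blast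
  with bij_betw_M_class M_arc_M_class show ?thesis
    by (rule connected_homogeneous_transfer)
qed

end
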